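(* Suppose $\{0,1\}\subseteq\Sigma$ and let $\pi=x_1^4x_2^8x_3^9$. Then $\mathrm{TD}(\pi,\mathrm{NC}\Pi^{|\Sigma|}_{\infty,9})\le4$; specifically, the set $\{(v_1,+),(v_2,-),(v_3,-),(v_4,-)\}$ with $v_1=(01)^4(001)^8(0001)^9$, $v_2=(01)^{9!}(001)^{9!}(0001)^{9!}(00001)^{9!}$, $v_3=0^8(10^6)^80^3$, $v_4=(01)^4(001)^4(0001)^9$ is a teaching set for $\pi$ w.r.t. $\mathrm{NC}\Pi^{|\Sigma|}_{\infty,9}$.
   Context: Fix a countably infinite set $X$ of variables and an alphabet $\Sigma$ disjoint from $X$. A pattern is a nonempty finite string over $X\cup\Sigma$. A substitution is a morphism $h:(X\cup\Sigma)^*\to\Sigma^*$ fixing letters; $L(\pi)$ (erasing pattern language) is the set of all $h(\pi)$. A non-cross pattern is a constant-free pattern $x_0^{n_0}\cdots x_k^{n_k}$ with distinct variables and $n_i\ge1$; $\mathrm{NC}\Pi^z_{\infty,m}$ is the class of non-cross patterns over an alphabet of size $z$ in which every variable occurs at most $m$ times. A labelled example is $(w,\pm)$ with $w\in\Sigma^*$; a teaching set for $\pi$ w.r.t. a class $\Pi$ is a set $T$ of labelled examples consistent with $\pi$ ($w\in L(\pi)$ iff label $+$) such that every $\tau\in\Pi$ consistent with $T$ has $L(\tau)=L(\pi)$; $\mathrm{TD}(\pi,\Pi)$ is its minimum size. *)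

theory Defs
  imports Main "HOL-Library.Extended_Nat"
begin

datatype 'a sym = Var nat | Const 'a

type_synonym 'a pattern = "'a sym list"

definition is_pattern :: "'a pattern \<Rightarrow> bool" where
  "is_pattern p \<longleftrightarrow> p \<noteq> []"

definition subst :: "(nat \<Rightarrow> 'a list) \<Rightarrow> 'a pattern \<Rightarrow> 'a list" where
  "subst h p = concat (map (\<lambda>s. case s of Var x \<Rightarrow> h x | Const c \<Rightarrow> [c]) p)"

text \<open>Erasing pattern language.\<close>
definition lang :: "'a pattern \<Rightarrow> 'a list set" where
  "lang p = {subst h p | h. True}"

definition wpow :: "'a list \<Rightarrow> nat \<Rightarrow> 'a list" where
  "wpow w n = concat (replicate n w)"

definition non_cross :: "'a pattern \<Rightarrow> bool" where
  "non_cross p \<longleftrightarrow> (\<exists>xs ns. xs \<noteq> [] \<and> length xs = length ns \<and> distinct xs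
      \<and> (\<forall>n\<in>set ns. n \<ge> 1)
      \<and> p = concat (map (\<lambda>(x, n). replicate n (Var x)) (zip xs ns)))"

definition NC_class :: "nat \<Rightarrow> 'a pattern set" where
  "NC_class m = {p. non_cross p \<and> (\<forall>x. count_list p (Var x) \<le> m)}"

text \<open>Labelled examples (w, True) = (w,+), (w, False) = (w,-).\<close>
definition consistent :: "'a pattern \<Rightarrow> ('a list \<times> bool) set \<Rightarrow> bool" where
  "consistent p T \<longleftrightarrow> (\<forall>(w, b)\<in>T. (w \<in> lang p \<longleftrightarrow> b))"

definition teaching_set :: "'a pattern \<Rightarrow> 'a pattern set \<Rightarrow> ('a list \<times> bool) set \<Rightarrow> bool" where
  "teaching_set p C T \<longleftrightarrow> finite T \<and> consistent p T \<and>
     (\<forall>\<tau>\<in>C. consistent \<tau> T \<longrightarrow> lang \<tau> = lang p)"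

text \<open>Teaching dimension (infinity if no finite teaching set exists).\<close>
definition TD :: "'a pattern \<Rightarrow> 'a pattern set \<Rightarrow> enat" where
  "TD p C = (INF T \<in> {T. teaching_set p C T}. enat (card T))"

end

theory Submission
  imports Defs
begin

(* Identify the letters 0 and 1 with False and True.  A non-cross pattern with exponents
   n_1, ..., n_k generates exactly the words u_1^n_1 ... u_k^n_k.  An exponent 1 would admit v3,
   and k >= 4 would admit v2, since every exponent n_i <= 9 divides 9!; so k <= 3, and empty
   factors pad the pattern to exactly three.
   The words v1, v2 and v4 have nondecreasing gaps between consecutive 1s.  Inside a factor u^n
   with n >= 2 these gaps are periodic, hence constant, so each change of gap straddles a factor
   boundary.  v2 has three gap changes, too many for three factors.  In v1 the two changes locate
   both boundaries up to a few positions, which leaves only the exponents {2,4} x {2,4,8} x {3,9};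
   v3 and v4 exclude all of them except (4,8,9).
   Finally v3 is not in L(pi): its eight 1s force u_3 to consist of 0s, and 67 = 4a + 8b + 9c
   forces c >= 3, so that u_3^9 would cover the last 1 of v3. *)

section \<open>Languages of non-cross patterns\<close>

lemma wpow_0 [simp]: "wpow w 0 = []"
  by (simp add: wpow_def)

lemma wpow_Suc: "wpow w (Suc n) = w @ wpow w n"
  by (simp add: wpow_def)

lemma wpow_Nil [simp]: "wpow [] n = []"
  by (simp add: wpow_def)

lemma length_wpow [simp]: "length (wpow w n) = n * length w"
  by (simp add: wpow_def length_concat sum_list_replicate)

lemma count_list_wpow [simp]: "count_list (wpow w n) x = n * count_list w x"
  by (induction n) (simp_all add: wpow_Suc)

lemma set_wpow_subset: "set (wpow w n) \<subseteq> set w"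
  by (auto simp: wpow_def)

lemma map_wpow: "map f (wpow w n) = wpow (map f w) n"
  by (simp add: wpow_def map_concat)

lemma wpow_add: "wpow w (m + n) = wpow w m @ wpow w n"
  by (simp add: wpow_def replicate_add)

lemma wpow_mult: "wpow (wpow w m) n = wpow w (m * n)"
  by (induction n) (simp_all add: wpow_Suc wpow_add)

lemma nth_wpow: "k < n * length w \<Longrightarrow> wpow w n ! k = w ! (k mod length w)"
proof (induction n arbitrary: k)
  case (Suc n)
  show ?case
  proof (cases "k < length w")
    case False
    then have "wpow w n ! (k - length w) = w ! (k mod length w)"
      using Suc by (simp add: le_mod_geq)
    with False show ?thesis by (simp add: wpow_Suc nth_append)
  qed (simp add: wpow_Suc nth_append)
qed simp

definition nc_pattern :: "nat list \<Rightarrow> nat list \<Rightarrow> 'a pattern" where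
  "nc_pattern xs ns = concat (map (\<lambda>(x, n). replicate n (Var x)) (zip xs ns))"

definition power_lang :: "nat list \<Rightarrow> 'a list set" where
  "power_lang ns = {concat (map2 wpow us ns) | us. length us = length ns}"

lemma power_lang_Nil [simp]: "power_lang [] = {[]}"
  by (simp add: power_lang_def)

lemma power_lang_Cons: "power_lang (n # ns) = {wpow u n @ w | u w. w \<in> power_lang ns}"
proof (intro set_eqI iffI)
  fix v assume "v \<in> power_lang (n # ns)"
  then obtain u us where "length us = length ns" "v = wpow u n @ concat (map2 wpow us ns)"
    by (auto simp: power_lang_def length_Suc_conv)
  then show "v \<in> {wpow u n @ w | u w. w \<in> power_lang ns}"
    by (auto simp: power_lang_def)
next
  fix v assume "v \<in> {wpow u n @ w | u w. w \<in> power_lang ns}"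
  then obtain u us where "length us = length ns" "v = wpow u n @ concat (map2 wpow us ns)"
    by (auto simp: power_lang_def)
  then show "v \<in> power_lang (n # ns)"
    unfolding power_lang_def by (intro CollectI exI[of _ "u # us"]) simp
qed

lemma mem_power_lang_3:
  "w \<in> power_lang [a, b, c] \<longleftrightarrow> (\<exists>u1 u2 u3. w = wpow u1 a @ wpow u2 b @ wpow u3 c)"
  by (simp add: power_lang_Cons) blast

lemma Nil_in_power_lang: "[] \<in> power_lang ns"
  by (induction ns) (auto simp: power_lang_Cons intro: exI[of _ "[]"])

lemma power_lang_append_subset: "power_lang ns \<subseteq> power_lang (ns @ ms)"
proof (induction ns)
  case Nil
  then show ?case by (simp add: Nil_in_power_lang)
next
  case (Cons n ns)
  then show ?case by (fastforce simp: power_lang_Cons)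
qed

lemma map_in_power_lang: "w \<in> power_lang ns \<Longrightarrow> map f w \<in> power_lang ns"
proof (induction ns arbitrary: w)
  case (Cons n ns)
  then obtain u v where "w = wpow u n @ v" "v \<in> power_lang ns"
    by (auto simp: power_lang_Cons)
  with Cons.IH show ?case
    by (auto simp: power_lang_Cons map_wpow)
qed simp

lemma inj_map_in_power_lang_iff:
  assumes "inj f"
  shows "map f w \<in> power_lang ns \<longleftrightarrow> w \<in> power_lang ns"
  using map_in_power_lang[of "map f w" ns "inv f"] map_in_power_lang[of w ns f]
  by (auto simp: inv_o_cancel[OF assms])

lemma power_lang_eq_UNIV_if_exponent_1:
  assumes "1 \<in> set ns"
  shows "power_lang ns = UNIV"
proof -
  have "w \<in> power_lang ns" for w
    using assms
  proof (induction ns arbitrary: w)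
    case (Cons n ns)
    show ?case
    proof (cases "n = 1")
      case True
      then have "w = wpow w n @ []" by (simp add: wpow_def)
      then show ?thesis
        using Nil_in_power_lang by (auto simp: power_lang_Cons simp del: append_Nil2)
    next
      case False
      with Cons have "w \<in> power_lang ns" by simp
      then show ?thesis
        by (force simp: power_lang_Cons intro: exI[of _ "[]"])
    qed
  qed simp
  then show ?thesis
    by blast
qed

lemma concat_powers_in_power_lang:
  assumes "\<forall>n\<in>set ns. n dvd N" and "length us \<le> length ns"
  shows "concat (map (\<lambda>u. wpow u N) us) \<in> power_lang ns"
  using assms
proof (induction us arbitrary: ns)
  case Nil
  then show ?case by (simp add: Nil_in_power_lang)
next
  case (Cons u us)
  then obtain n ns' where ns: "ns = n # ns'" by (cases ns) auto
  with Cons have "wpow u N = wpow (wpow u (N div n)) n" by (simp add: wpow_mult)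
  with Cons ns show ?case by (auto simp: power_lang_Cons)
qed

lemma subst_nc_pattern:
  "length xs = length ns \<Longrightarrow> subst h (nc_pattern xs ns) = concat (map2 wpow (map h xs) ns)"
  by (induction xs ns rule: list_induct2)
     (simp_all add: nc_pattern_def subst_def wpow_def map_replicate)

lemma lang_nc_pattern:
  assumes "distinct xs" and "length xs = length ns"
  shows "lang (nc_pattern xs ns) = power_lang ns"
proof (intro set_eqI iffI)
  fix w assume "w \<in> lang (nc_pattern xs ns)"
  with assms(2) show "w \<in> power_lang ns"
    by (auto simp: lang_def power_lang_def subst_nc_pattern)
next
  fix w assume "w \<in> power_lang ns"
  then obtain us where us: "length us = length ns" "w = concat (map2 wpow us ns)"
    by (auto simp: power_lang_def)
  define h where "h x = the (map_of (zip xs us) x)" for x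
  have "map h xs = us"
    using assms us by (intro nth_equalityI) (simp_all add: h_def map_of_zip_nth)
  with us assms(2) have "w = subst h (nc_pattern xs ns)"
    by (simp add: subst_nc_pattern)
  then show "w \<in> lang (nc_pattern xs ns)"
    by (auto simp: lang_def)
qed

lemma count_nc_pattern_ge:
  "(x, n) \<in> set (zip xs ns) \<Longrightarrow> n \<le> count_list (nc_pattern xs ns) (Var x)"
proof (induction xs arbitrary: ns)
  case (Cons y xs)
  then obtain m ms where "ns = m # ms" by (cases ns) auto
  with Cons show ?case
    by (auto simp: nc_pattern_def count_list_eq_length_filter intro: trans_le_add2)
qed simp

lemma NC_class_lang:
  assumes "\<tau> \<in> NC_class m"
  obtains ns where "ns \<noteq> []" "\<forall>n\<in>set ns. 1 \<le> n \<and> n \<le> m" "lang \<tau> = power_lang ns"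
proof -
  from assms obtain xs ns where nc: "xs \<noteq> []" "length xs = length ns" "distinct xs"
      "\<forall>n\<in>set ns. 1 \<le> n" "\<tau> = nc_pattern xs ns"
    and count: "\<forall>x. count_list \<tau> (Var x) \<le> m"
    by (auto simp: NC_class_def non_cross_def nc_pattern_def)
  have "n \<le> m" if "n \<in> set ns" for n
  proof -
    from that nc(2) obtain x where "(x, n) \<in> set (zip xs ns)"
      by (metis in_set_impl_in_set_zip2)
    then show ?thesis
      using count_nc_pattern_ge count nc(5) order_trans by metis
  qed
  with nc show ?thesis
    by (intro that) (auto simp: lang_nc_pattern)
qed

lemma TD_le_card: "teaching_set p C T \<Longrightarrow> TD p C \<le> enat (card T)"
  unfolding TD_def by (rule INF_lower) simp

section \<open>Gaps between consecutive ones\<close>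

definition consecutive_ones :: "bool list \<Rightarrow> nat \<Rightarrow> nat \<Rightarrow> bool" where
  "consecutive_ones w i j \<longleftrightarrow>
     i < j \<and> j < length w \<and> w ! i \<and> w ! j \<and> (\<forall>t. i < t \<and> t < j \<longrightarrow> \<not> w ! t)"

definition gaps_mono :: "bool list \<Rightarrow> bool" where
  "gaps_mono w \<longleftrightarrow> (\<forall>i j i' j'. consecutive_ones w i j \<longrightarrow> consecutive_ones w i' j' \<longrightarrow>
     i \<le> i' \<longrightarrow> j - i \<le> j' - i')"

lemma all_between_shift:
  "(\<forall>t. a + p < t \<and> t < b + p \<longrightarrow> P t) \<longleftrightarrow> (\<forall>t::nat. a < t \<and> t < b \<longrightarrow> P (t + p))"
proof
  assume between: "\<forall>t. a < t \<and> t < b \<longrightarrow> P (t + p)"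
  show "\<forall>t. a + p < t \<and> t < b + p \<longrightarrow> P t"
  proof (intro allI impI)
    fix t assume "a + p < t \<and> t < b + p"
    then have "a < t - p" "t - p < b" "t - p + p = t" by auto
    with between show "P t" by metis
  qed
qed auto

lemma consecutive_ones_append_iff:
  "consecutive_ones (u @ v) (length u + i) (length u + j) \<longleftrightarrow> consecutive_ones v i j"
  using all_between_shift[of i "length u" j "\<lambda>t. \<not> (u @ v) ! t"]
  by (auto simp: consecutive_ones_def nth_append add.commute)

lemma nth_periodic_in_power:
  assumes "w = P @ wpow u n @ Q" and "length P \<le> t" and "t + length u < length P + n * length u"
  shows "w ! t = w ! (t + length u)"
proof -
  have "t - length P < n * length u" "t + length u - length P < n * length u"
    using assms(2,3) by linarith+
  moreover have "(t + length u - length P) mod length u = (t - length P) mod length u"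
    using assms(2) by (metis Nat.add_diff_assoc2 mod_add_self2)
  ultimately show ?thesis
    using assms by (simp add: nth_append nth_wpow)
qed

lemma consecutive_ones_shift_iff:
  assumes per: "\<And>t. s \<le> t \<Longrightarrow> t + p < e \<Longrightarrow> w ! t = w ! (t + p)"
    and "s \<le> i" and "j + p < e" and "e \<le> length w"
  shows "consecutive_ones w (i + p) (j + p) \<longleftrightarrow> consecutive_ones w i j"
proof -
  have "w ! (t + p) = w ! t" if "i \<le> t" "t \<le> j" for t
    using per[of t] that assms(2,3) by simp
  moreover have "(\<forall>t. i + p < t \<and> t < j + p \<longrightarrow> \<not> w ! t) \<longleftrightarrow>
      (\<forall>t. i < t \<and> t < j \<longrightarrow> \<not> w ! (t + p))"
    by (rule all_between_shift)
  ultimately show ?thesis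
    using assms(3,4) by (auto simp: consecutive_ones_def)
qed

lemma consecutive_ones_gap_le_period:
  assumes per: "\<And>t. s \<le> t \<Longrightarrow> t + p < e \<Longrightarrow> w ! t = w ! (t + p)" and "0 < p"
    and ij: "consecutive_ones w i j" and "s \<le> i" and "j < e"
  shows "j - i \<le> p"
proof (rule ccontr)
  assume "\<not> j - i \<le> p"
  then have "i < i + p" "i + p < j"
    using \<open>0 < p\<close> by auto
  moreover from calculation have "w ! (i + p)"
    using per[of i] ij assms(4,5) by (simp add: consecutive_ones_def)
  ultimately show False
    using ij by (auto simp: consecutive_ones_def)
qed

lemma consecutive_gaps_eq_in_power:
  assumes mono: "gaps_mono w" and w: "w = P @ wpow u n @ Q" and "2 \<le> n"
    and ij: "consecutive_ones w i j" and jk: "consecutive_ones w j k"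
    and "length P \<le> i" and "k < length P + n * length u"
  shows "j - i = k - j"
proof -
  (* Both gaps are at most |u|, and since n >= 2 either (i, j) shifted up by |u| or (j, k)
     shifted down by |u| is again a pair of consecutive ones inside u^n; comparing it with the
     other pair gives the reverse inequality. *)
  define p where "p = length u"
  define s where "s = length P"
  define e where "e = s + n * p"
  have per: "\<And>t. s \<le> t \<Longrightarrow> t + p < e \<Longrightarrow> w ! t = w ! (t + p)"
    using nth_periodic_in_power[OF w] by (simp add: p_def s_def e_def)
  have ordered: "i < j" "j < k" "s \<le> i" "k < e" "e \<le> length w"
    using ij jk assms(6,7) w by (auto simp: consecutive_ones_def s_def e_def p_def)
  then have "0 < p"
    by (cases p) (simp_all add: s_def e_def p_def)
  have gap_ij: "j - i \<le> p" and gap_jk: "k - j \<le> p"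
    using consecutive_ones_gap_le_period[OF per \<open>0 < p\<close>] ij jk ordered by simp_all
  have "j - i \<le> k - j"
    using mono ij jk ordered unfolding gaps_mono_def by simp
  moreover have "k - j \<le> j - i"
  proof (cases "j + p < e")
    case True
    then have "consecutive_ones w (i + p) (j + p)"
      using consecutive_ones_shift_iff[OF per] ij ordered by simp
    moreover have "j \<le> i + p"
      using gap_ij by simp
    ultimately show ?thesis
      using mono jk unfolding gaps_mono_def by fastforce
  next
    case False
    have "2 * p \<le> n * p"
      using \<open>2 \<le> n\<close> by simp
    then have "s \<le> j - p" "p \<le> j"
      using False unfolding e_def by linarith+
    then have "consecutive_ones w (j - p) (k - p)"
      using consecutive_ones_shift_iff[OF per, where i = "j - p" and j = "k - p"] jk ordered gap_jk
      by simp
    moreover have "j - p \<le> i"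
      using gap_ij ordered by simp
    ultimately have "(k - p) - (j - p) \<le> j - i"
      using mono ij unfolding gaps_mono_def by blast
    then show ?thesis
      using \<open>p \<le> j\<close> ordered by simp
  qed
  ultimately show ?thesis
    by simp
qed

lemma gap_change_between_power_factors:
  assumes mono: "gaps_mono w" and w: "w = wpow u1 n1 @ wpow u2 n2 @ wpow u3 n3"
    and n: "2 \<le> n1" "2 \<le> n2" "2 \<le> n3"
    and ij: "consecutive_ones w i j" and jk: "consecutive_ones w j k" and "j - i \<noteq> k - j"
  shows "\<exists>q \<in> {n1 * length u1, n1 * length u1 + n2 * length u2}. i < q \<and> q \<le> k"
proof (rule ccontr)
  assume no_boundary: "\<not> ?thesis"
  have "i < k" "k < length w"
    using ij jk by (auto simp: consecutive_ones_def)
  with no_boundary consider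
      "k < n1 * length u1"
    | "n1 * length u1 \<le> i" "k < n1 * length u1 + n2 * length u2"
    | "n1 * length u1 + n2 * length u2 \<le> i"
    by force
  then have "j - i = k - j"
  proof cases
    case 1
    with w n(1) show ?thesis
      by (intro consecutive_gaps_eq_in_power[OF mono _ _ ij jk, where P = "[]"]) auto
  next
    case 2
    with w n(2) show ?thesis
      by (intro consecutive_gaps_eq_in_power[OF mono _ _ ij jk, where P = "wpow u1 n1"]) auto
  next
    case 3
    with w n(3) \<open>k < length w\<close> show ?thesis
      by (intro consecutive_gaps_eq_in_power[OF mono _ _ ij jk,
            where P = "wpow u1 n1 @ wpow u2 n2" and Q = "[]"]) auto
  qed
  with \<open>j - i \<noteq> k - j\<close> show False ..
qed

definition gap_word :: "nat list \<Rightarrow> bool list" where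
  "gap_word gs = concat (map (\<lambda>g. replicate g False @ [True]) gs)"

lemma gap_word_Nil [simp]: "gap_word [] = []"
  by (simp add: gap_word_def)

lemma gap_word_Cons: "gap_word (g # gs) = replicate g False @ True # gap_word gs"
  by (simp add: gap_word_def)

lemma gap_word_append [simp]: "gap_word (xs @ ys) = gap_word xs @ gap_word ys"
  by (simp add: gap_word_def)

lemma gap_word_replicate: "gap_word (replicate n g) = wpow (replicate g False @ [True]) n"
  by (simp add: gap_word_def wpow_def map_replicate)

lemma length_gap_word [simp]: "length (gap_word gs) = sum_list gs + length gs"
  by (induction gs) (simp_all add: gap_word_Cons)

lemma consecutive_ones_gap_word:
  "consecutive_ones (gap_word (xs @ g # g' # ys))
     (length (gap_word xs) + g) (length (gap_word xs) + g + Suc g')"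
proof -
  define L where "L = length (gap_word xs)"
  define v where "v = replicate g False @ True # replicate g' False @ True # gap_word ys"
  have w: "gap_word (xs @ g # g' # ys) = gap_word xs @ v"
    by (simp add: v_def gap_word_Cons)
  have v: "v ! g" "v ! (g + Suc g')" "g + Suc g' < length v"
    by (simp_all add: v_def nth_append)
  have "\<not> v ! t" if "g < t" "t < g + Suc g'" for t
    using that by (auto simp: v_def nth_append nth_Cons')
  with v have "consecutive_ones v g (g + Suc g')"
    by (simp add: consecutive_ones_def)
  then have "consecutive_ones (gap_word xs @ v) (L + g) (L + (g + Suc g'))"
    unfolding L_def by (simp only: consecutive_ones_append_iff)
  then show ?thesis
    by (simp only: w L_def add.assoc)
qed

lemma consecutive_ones_right_unique:
  "consecutive_ones w i j \<Longrightarrow> consecutive_ones w i j' \<Longrightarrow> j = j'"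
  unfolding consecutive_ones_def by (metis linorder_neqE_nat)

lemma consecutive_ones_gap_word_Cons:
  assumes ij: "consecutive_ones (gap_word (g # gs)) i j"
  shows "(i = g \<and> gs \<noteq> [] \<and> j = g + Suc (hd gs))
    \<or> (g < i \<and> consecutive_ones (gap_word gs) (i - Suc g) (j - Suc g))"
proof (cases "g < i")
  case True
  have "gap_word (g # gs) = (replicate g False @ [True]) @ gap_word gs"
    by (simp add: gap_word_Cons)
  with True ij consecutive_ones_append_iff[of "replicate g False @ [True]" "gap_word gs"
      "i - Suc g" "j - Suc g"]
  show ?thesis
    by (simp add: consecutive_ones_def)
next
  case False
  with ij have "i = g"
    by (auto simp: consecutive_ones_def gap_word_Cons nth_append)
  moreover obtain g' gs' where gs: "gs = g' # gs'"
    using ij \<open>i = g\<close> by (cases gs) (auto simp: consecutive_ones_def gap_word_Cons)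
  moreover have "consecutive_ones (gap_word (g # gs)) g (g + Suc g')"
    using consecutive_ones_gap_word[of "[]" g g' gs'] gs by simp
  ultimately show ?thesis
    using consecutive_ones_right_unique ij by auto
qed

lemma gap_word_gap_ge_hd:
  "sorted gs \<Longrightarrow> consecutive_ones (gap_word gs) i j \<Longrightarrow> Suc (hd gs) \<le> j - i"
proof (induction gs arbitrary: i j)
  case Nil
  then show ?case by (simp add: consecutive_ones_def)
next
  case (Cons g gs)
  from consecutive_ones_gap_word_Cons[OF Cons.prems(2)]
  have "gs \<noteq> [] \<and> Suc (hd gs) \<le> j - i"
  proof
    assume later: "g < i \<and> consecutive_ones (gap_word gs) (i - Suc g) (j - Suc g)"
    then have "gs \<noteq> []" "i < j"
      by (auto simp: consecutive_ones_def)
    with later Cons.IH[of "i - Suc g" "j - Suc g"] Cons.prems(1) show ?thesis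
      by simp
  qed simp
  moreover have "gs \<noteq> [] \<Longrightarrow> g \<le> hd gs"
    using Cons.prems(1) by (cases gs) simp_all
  ultimately show ?case
    by simp
qed

lemma gaps_mono_gap_word: "sorted gs \<Longrightarrow> gaps_mono (gap_word gs)"
proof (induction gs)
  case Nil
  then show ?case by (simp add: gaps_mono_def consecutive_ones_def)
next
  case (Cons g gs)
  show ?case
    unfolding gaps_mono_def
  proof (intro allI impI)
    fix i j i' j'
    assume ij: "consecutive_ones (gap_word (g # gs)) i j"
      and ij': "consecutive_ones (gap_word (g # gs)) i' j'" and "i \<le> i'"
    have "i < j" "i' < j'"
      using ij ij' by (simp_all add: consecutive_ones_def)
    show "j - i \<le> j' - i'"
    proof (cases "g < i")
      case True
      with \<open>i \<le> i'\<close> have "consecutive_ones (gap_word gs) (i - Suc g) (j - Suc g)"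
        and "consecutive_ones (gap_word gs) (i' - Suc g) (j' - Suc g)"
        using consecutive_ones_gap_word_Cons[OF ij] consecutive_ones_gap_word_Cons[OF ij'] by auto
      moreover have "gaps_mono (gap_word gs)" and "i - Suc g \<le> i' - Suc g"
        using Cons \<open>i \<le> i'\<close> by simp_all
      ultimately have "(j - Suc g) - (i - Suc g) \<le> (j' - Suc g) - (i' - Suc g)"
        unfolding gaps_mono_def by blast
      with True \<open>i \<le> i'\<close> \<open>i < j\<close> \<open>i' < j'\<close> show ?thesis
        by simp
    next
      case False
      then have "j - i = Suc (hd gs)"
        using consecutive_ones_gap_word_Cons[OF ij] by auto
      moreover have "Suc (hd gs) \<le> j' - i'"
        using consecutive_ones_gap_word_Cons[OF ij']
          gap_word_gap_ge_hd[of gs "i' - Suc g" "j' - Suc g"]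
          Cons.prems \<open>i' < j'\<close> by auto
      ultimately show ?thesis
        by simp
    qed
  qed
qed

lemma gap_word_factor_boundary:
  assumes "sorted gs" and gs: "gs = xs @ a # b # c # ys" and "b \<noteq> c"
    and w: "gap_word gs = wpow u1 n1 @ wpow u2 n2 @ wpow u3 n3"
    and n: "2 \<le> n1" "2 \<le> n2" "2 \<le> n3"
  shows "\<exists>q \<in> {n1 * length u1, n1 * length u1 + n2 * length u2}.
    length (gap_word xs) + a < q \<and> q \<le> length (gap_word xs) + a + b + c + 2"
proof -
  define i where "i = length (gap_word xs) + a"
  have "consecutive_ones (gap_word gs) i (i + Suc b)"
    using consecutive_ones_gap_word[of xs a b "c # ys"] gs by (simp add: i_def)
  moreover have "consecutive_ones (gap_word gs) (i + Suc b) (i + Suc b + Suc c)"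
    using consecutive_ones_gap_word[of "xs @ [a]" b c ys] gs by (simp add: i_def)
  ultimately show ?thesis
    using gap_change_between_power_factors[OF gaps_mono_gap_word[OF \<open>sorted gs\<close>] w n]
      \<open>b \<noteq> c\<close> by (fastforce simp: i_def)
qed

section \<open>The teaching words\<close>

definition is_nth_power :: "'a list \<Rightarrow> nat \<Rightarrow> bool" where
  "is_nth_power w n \<longleftrightarrow> n dvd length w \<and> wpow (take (length w div n) w) n = w"

lemma is_nth_power_wpow: "0 < n \<Longrightarrow> is_nth_power (wpow u n) n"
proof -
  assume "0 < n"
  then have "take (length u) (wpow u n) = u"
    by (cases n) (simp_all add: wpow_Suc)
  with \<open>0 < n\<close> show ?thesis
    by (simp add: is_nth_power_def)
qed

definition v1_bits :: "bool list" where
  "v1_bits = gap_word (replicate 4 1 @ replicate 8 2 @ replicate 9 3)"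

definition v2_bits :: "nat \<Rightarrow> bool list" where
  "v2_bits N = gap_word (replicate N 1 @ replicate N 2 @ replicate N 3 @ replicate N 4)"

definition v3_bits :: "bool list" where
  "v3_bits = wpow [False] 8 @ wpow (True # wpow [False] 6) 8 @ wpow [False] 3"

definition v4_bits :: "bool list" where
  "v4_bits = gap_word (replicate 4 1 @ replicate 4 2 @ replicate 9 3)"

lemma v1_bits_nth_power_prefixes:
  "\<forall>q \<in> set [6..<11]. \<forall>n \<in> set [2..<10].
     is_nth_power (take q v1_bits) n \<longrightarrow> (q, n) \<in> {(6, 3), (8, 2), (8, 4)}"
  by code_simp

lemma v1_bits_nth_power_suffixes:
  "\<forall>q \<in> set [29..<36]. \<forall>n \<in> set [2..<10].
     is_nth_power (drop q v1_bits) n \<longrightarrow> (q, n) \<in> {(32, 3), (32, 9)}"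
  by code_simp

lemma v1_bits_nth_power_middles:
  "\<forall>n \<in> set [2..<10]. \<not> is_nth_power (take 26 (drop 6 v1_bits)) n"
  "\<forall>n \<in> set [2..<10]. is_nth_power (take 24 (drop 8 v1_bits)) n \<longrightarrow> n \<in> {2, 4, 8}"
  by code_simp+

lemma v1_bits_factor_exponents:
  assumes w: "v1_bits = wpow u1 n1 @ wpow u2 n2 @ wpow u3 n3"
    and n: "n1 \<in> {2..9}" "n2 \<in> {2..9}" "n3 \<in> {2..9}"
  shows "n1 \<in> {2, 4} \<and> n2 \<in> {2, 4, 8} \<and> n3 \<in> {3, 9}"
proof -
  define q1 where "q1 = n1 * length u1"
  define q2 where "q2 = q1 + n2 * length u2"
  have sorted: "sorted (replicate 4 1 @ replicate 8 2 @ replicate 9 (3::nat))"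
    by (simp add: sorted_append)
  have "replicate 4 1 @ replicate 8 2 @ replicate 9 3
      = [1, 1] @ 1 # 1 # 2 # (replicate 7 2 @ replicate 9 (3::nat))"
    and "replicate 4 1 @ replicate 8 2 @ replicate 9 3
      = (replicate 4 1 @ replicate 6 2) @ 2 # 2 # 3 # replicate 8 (3::nat)"
    by (simp_all add: numeral_eq_Suc)
  (* the gap grows from 2 to 3 at the ones 5, 7, 10 and from 3 to 4 at the ones 28, 31, 35 *)
  from this[THEN gap_word_factor_boundary[OF sorted _ _ w[unfolded v1_bits_def]]] n
  have "\<exists>q \<in> {q1, q2}. 5 < q \<and> q \<le> 10" and "\<exists>q \<in> {q1, q2}. 28 < q \<and> q \<le> 35"
    by (simp_all add: q1_def q2_def sum_list_replicate numeral_eq_Suc)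
  then have q: "q1 \<in> set [6..<11]" "q2 \<in> set [29..<36]"
    unfolding q2_def by auto
  have powers: "is_nth_power (take q1 v1_bits) n1"
      "is_nth_power (take (q2 - q1) (drop q1 v1_bits)) n2" "is_nth_power (drop q2 v1_bits) n3"
    using n by (simp_all add: w q1_def q2_def is_nth_power_wpow)
  have n': "n1 \<in> set [2..<10]" "n2 \<in> set [2..<10]" "n3 \<in> set [2..<10]"
    using n by auto
  have q1n1: "(q1, n1) \<in> {(6, 3), (8, 2), (8, 4)}" and q2n3: "(q2, n3) \<in> {(32, 3), (32, 9)}"
    using v1_bits_nth_power_prefixes v1_bits_nth_power_suffixes q n' powers by blast+
  then have "q1 = 8" "q2 = 32"
    using v1_bits_nth_power_middles(1) n'(2) powers(2) by auto
  then show ?thesis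
    using q1n1 q2n3 v1_bits_nth_power_middles(2) n'(2) powers(2) by auto
qed

lemma v2_bits_not_in_power_lang:
  assumes "2 \<le> N" and n: "2 \<le> n1" "2 \<le> n2" "2 \<le> n3"
  shows "v2_bits N \<notin> power_lang [n1, n2, n3]"
proof
  assume "v2_bits N \<in> power_lang [n1, n2, n3]"
  then obtain u1 u2 u3 where
    w: "gap_word (replicate N 1 @ replicate N 2 @ replicate N 3 @ replicate N 4)
      = wpow u1 n1 @ wpow u2 n2 @ wpow u3 n3"
    by (auto simp: mem_power_lang_3 v2_bits_def)
  obtain M where N: "N = M + 2"
    using assms(1) by (metis le_add_diff_inverse2)
  have sorted: "sorted (replicate N 1 @ replicate N 2 @ replicate N 3 @ replicate N (4::nat))"
    by (simp add: sorted_append)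
  have "replicate N 1 @ replicate N 2 @ replicate N 3 @ replicate N 4
      = replicate M 1 @ 1 # 1 # 2 # (replicate (Suc M) 2 @ replicate N 3 @ replicate N (4::nat))"
    and "replicate N 1 @ replicate N 2 @ replicate N 3 @ replicate N 4
      = (replicate N 1 @ replicate M 2) @ 2 # 2 # 3 # (replicate (Suc M) 3 @ replicate N (4::nat))"
    and "replicate N 1 @ replicate N 2 @ replicate N 3 @ replicate N 4
      = (replicate N 1 @ replicate N 2 @ replicate M 3) @ 3 # 3 # 4 # replicate (Suc M) (4::nat)"
    by (simp_all add: N replicate_app_Cons_same)
  from this[THEN gap_word_factor_boundary[OF sorted _ _ w n]]
  have "\<exists>q \<in> {n1 * length u1, n1 * length u1 + n2 * length u2}. 2 * M + 1 < q \<and> q \<le> 2 * M + 6"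
    and "\<exists>q \<in> {n1 * length u1, n1 * length u1 + n2 * length u2}. 5 * M + 6 < q \<and> q \<le> 5 * M + 13"
    and "\<exists>q \<in> {n1 * length u1, n1 * length u1 + n2 * length u2}. 9 * M + 13 < q \<and> q \<le> 9 * M + 22"
    by (simp_all add: N sum_list_replicate) (auto simp: algebra_simps)
  then show False
    by auto
qed

lemma v4_bits_not_in_power_lang: "v4_bits \<notin> power_lang [4, 8, 9]"
proof
  assume "v4_bits \<in> power_lang [4, 8, 9]"
  then obtain u1 u2 u3 where
    w: "gap_word (replicate 4 1 @ replicate 4 2 @ replicate 9 3)
      = wpow u1 4 @ wpow u2 8 @ wpow u3 9"
    by (auto simp: mem_power_lang_3 v4_bits_def)
  have sorted: "sorted (replicate 4 1 @ replicate 4 2 @ replicate 9 (3::nat))"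
    by (simp add: sorted_append)
  have "replicate 4 1 @ replicate 4 2 @ replicate 9 3
      = [1, 1] @ 1 # 1 # 2 # (replicate 3 2 @ replicate 9 (3::nat))"
    and "replicate 4 1 @ replicate 4 2 @ replicate 9 3
      = (replicate 4 1 @ replicate 2 2) @ 2 # 2 # 3 # replicate 8 (3::nat)"
    by (simp_all add: numeral_eq_Suc)
  from this[THEN gap_word_factor_boundary[OF sorted _ _ w]]
  have "\<exists>q \<in> {4 * length u1, 4 * length u1 + 8 * length u2}. 5 < q \<and> q \<le> 10"
    and "\<exists>q \<in> {4 * length u1, 4 * length u1 + 8 * length u2}. 16 < q \<and> q \<le> 23"
    by (simp_all add: sum_list_replicate numeral_eq_Suc)
  then show False
    by auto presburger+
qed

lemma v3_bits_not_in_power_lang: "v3_bits \<notin> power_lang [4, 8, 9]"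
proof
  assume "v3_bits \<in> power_lang [4, 8, 9]"
  then obtain u1 u2 u3 where w: "v3_bits = wpow u1 4 @ wpow u2 8 @ wpow u3 9"
    by (auto simp: mem_power_lang_3)
  have v3: "count_list v3_bits True = 8" "length v3_bits = 67" "v3_bits ! 57"
    by code_simp+
  then have "4 * count_list u1 True + 8 * count_list u2 True + 9 * count_list u3 True = 8"
    unfolding w by (simp add: add.assoc)
  then have "count_list u3 True = 0"
    by presburger
  then have "True \<notin> set (wpow u3 9)"
    using set_wpow_subset by (fastforce simp: count_list_0_iff)
  moreover have "v3_bits ! 57 \<in> set (wpow u3 9)"
  proof -
    define P where "P = wpow u1 4 @ wpow u2 8"
    have "length P + 9 * length u3 = 67"
      using v3(2) unfolding w by (simp add: P_def)
    moreover have "length P = 4 * (length u1 + 2 * length u2)"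
      by (simp add: P_def)
    ultimately have "3 \<le> length u3"
      by presburger
    with \<open>length P + 9 * length u3 = 67\<close> have "length P \<le> 57" "57 - length P < 9 * length u3"
      by linarith+
    moreover have split: "v3_bits = P @ wpow u3 9"
      using w by (simp add: P_def)
    ultimately have "v3_bits ! 57 = wpow u3 9 ! (57 - length P)"
      and "57 - length P < length (wpow u3 9)"
      unfolding split by (simp_all add: nth_append)
    then show ?thesis
      by (simp only:) (rule nth_mem)
  qed
  ultimately show False
    using v3 by simp
qed

lemma v1_bits_in_power_lang: "v1_bits \<in> power_lang [4, 8, 9]"
  unfolding v1_bits_def mem_power_lang_3 by (auto simp: gap_word_replicate)

lemma v2_bits_in_power_lang:
  assumes "4 \<le> length ns" and "\<forall>n\<in>set ns. n dvd N"
  shows "v2_bits N \<in> power_lang ns"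
proof -
  define us where "us = [[False, True], [False, False, True], [False, False, False, True],
    [False, False, False, False, True]]"
  have "v2_bits N = concat (map (\<lambda>u. wpow u N) us)"
    by (simp add: v2_bits_def us_def gap_word_replicate numeral_eq_Suc)
  moreover have "length us \<le> length ns"
    using assms(1) by (simp add: us_def)
  ultimately show ?thesis
    using concat_powers_in_power_lang[OF assms(2)] by simp
qed

lemma v3_bits_in_power_lang:
  "a dvd 8 \<Longrightarrow> b dvd 8 \<Longrightarrow> v3_bits \<in> power_lang [a, b, 3]"
  "b dvd 8 \<Longrightarrow> v3_bits \<in> power_lang [2, b, 9]"
proof -
  assume "a dvd 8" "b dvd 8"
  then have "v3_bits = wpow (wpow [False] (8 div a)) a
      @ wpow (wpow (True # wpow [False] 6) (8 div b)) b @ wpow [False] 3"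
    by (simp add: v3_bits_def wpow_mult)
  then show "v3_bits \<in> power_lang [a, b, 3]"
    unfolding mem_power_lang_3 by blast
next
  assume "b dvd 8"
  have "v3_bits = wpow [False] 2 @ wpow (wpow [False] 6 @ [True]) 8 @ wpow [False] 9"
    by code_simp
  with \<open>b dvd 8\<close> have "v3_bits = wpow [False] 2 @ wpow (wpow (wpow [False] 6 @ [True]) (8 div b)) b
      @ wpow [False] 9"
    by (simp add: wpow_mult)
  then show "v3_bits \<in> power_lang [2, b, 9]"
    unfolding mem_power_lang_3 by blast
qed

lemma v4_bits_in_power_lang: "a dvd 4 \<Longrightarrow> b dvd 4 \<Longrightarrow> v4_bits \<in> power_lang [a, b, 9]"
proof -
  assume "a dvd 4" "b dvd 4"
  then have "v4_bits = wpow (wpow (replicate 1 False @ [True]) (4 div a)) a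
      @ wpow (wpow (replicate 2 False @ [True]) (4 div b)) b @ wpow (replicate 3 False @ [True]) 9"
    by (simp add: v4_bits_def gap_word_replicate wpow_mult)
  then show ?thesis
    unfolding mem_power_lang_3 by blast
qed

lemma exponents_determined_by_examples:
  assumes "ns \<noteq> []" and range: "\<forall>n\<in>set ns. 1 \<le> n \<and> n \<le> 9"
    and v1: "v1_bits \<in> power_lang ns" and v2: "v2_bits (fact 9) \<notin> power_lang ns"
    and v3: "v3_bits \<notin> power_lang ns" and v4: "v4_bits \<notin> power_lang ns"
  shows "ns = [4, 8, 9]"
proof -
  have "1 \<notin> set ns"
    using v3 power_lang_eq_UNIV_if_exponent_1 by blast
  with range have range': "\<forall>n\<in>set ns. n \<in> {2..9}"
    by (auto simp: le_less)
  have "length ns \<le> 3"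
  proof (rule ccontr)
    assume "\<not> length ns \<le> 3"
    moreover have "\<forall>n\<in>set ns. n dvd fact 9"
      using range by (auto intro: dvd_fact)
    ultimately show False
      using v2_bits_in_power_lang v2 by simp
  qed
  (* pad with empty factors; the exponent 2 keeps the hypotheses of v1_bits_factor_exponents *)
  define ns' where "ns' = ns @ replicate (3 - length ns) 2"
  have "length ns' = 3"
    using \<open>length ns \<le> 3\<close> by (simp add: ns'_def)
  then obtain a b c where abc: "ns' = [a, b, c]"
    by (auto simp: numeral_eq_Suc length_Suc_conv)
  have "v1_bits \<in> power_lang ns'"
    unfolding ns'_def by (rule subsetD[OF power_lang_append_subset v1])
  then have "v1_bits \<in> power_lang [a, b, c]"
    by (simp only: abc)
  then obtain u1 u2 u3 where "v1_bits = wpow u1 a @ wpow u2 b @ wpow u3 c"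
    by (auto simp: mem_power_lang_3)
  moreover have "\<forall>n\<in>set [a, b, c]. n \<in> {2..9}"
    using range' unfolding abc[symmetric] ns'_def by auto
  ultimately have a: "a \<in> {2, 4}" and b: "b \<in> {2, 4, 8}" and c: "c \<in> {3, 9}"
    using v1_bits_factor_exponents by auto
  have "length ns = 3"
  proof (rule ccontr)
    assume "length ns \<noteq> 3"
    with \<open>length ns \<le> 3\<close> have "last ns' = 2"
      by (simp add: ns'_def)
    with abc c show False
      by simp
  qed
  with abc have ns: "ns = [a, b, c]"
    by (simp add: ns'_def)
  have "a dvd 8" "b dvd 8"
    using a b by auto
  with v3 v3_bits_in_power_lang(1) c have "c = 9"
    unfolding ns by auto
  with v3 v3_bits_in_power_lang(2) \<open>b dvd 8\<close> a have "a = 4"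
    unfolding ns by auto
  with v4 v4_bits_in_power_lang \<open>c = 9\<close> b have "b = 8"
    unfolding ns by auto
  with ns \<open>a = 4\<close> \<open>c = 9\<close> show ?thesis
    by simp
qed

lemma lang_pattern_4_8_9:
  "lang (replicate 4 (Var 1) @ replicate 8 (Var 2) @ replicate 9 (Var 3)) = power_lang [4, 8, 9]"
  using lang_nc_pattern[of "[1, 2, 3]" "[4, 8, 9]"] by (simp add: nc_pattern_def)

lemma teaching_set_power_lang_4_8_9:
  assumes "inj \<phi>" and lang_p: "lang p = power_lang [4, 8, 9]"
  shows "teaching_set p (NC_class 9) {(map \<phi> v1_bits, True), (map \<phi> (v2_bits (fact 9)), False),
    (map \<phi> v3_bits, False), (map \<phi> v4_bits, False)}" (is "teaching_set p _ ?T")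
proof -
  have consistent_iff: "consistent q ?T \<longleftrightarrow> v1_bits \<in> power_lang ns
      \<and> v2_bits (fact 9) \<notin> power_lang ns \<and> v3_bits \<notin> power_lang ns \<and> v4_bits \<notin> power_lang ns"
    if "lang q = power_lang ns" for q ns
    using that by (simp add: consistent_def inj_map_in_power_lang_iff[OF \<open>inj \<phi>\<close>])
  have "2 \<le> (fact 9 :: nat)"
    using fact_ge_self[of 9] by linarith
  then have "consistent p ?T"
    using consistent_iff[OF lang_p] v1_bits_in_power_lang v2_bits_not_in_power_lang
      v3_bits_not_in_power_lang v4_bits_not_in_power_lang by simp
  moreover have "lang \<tau> = lang p" if \<tau>: "\<tau> \<in> NC_class 9" and "consistent \<tau> ?T" for \<tau>
  proof -
    obtain ns where "ns \<noteq> []" "\<forall>n\<in>set ns. 1 \<le> n \<and> n \<le> 9" and lang_\<tau>: "lang \<tau> = power_lang ns"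
      using NC_class_lang[OF \<tau>] .
    with \<open>consistent \<tau> ?T\<close> have "ns = [4, 8, 9]"
      using consistent_iff[OF lang_\<tau>] exponents_determined_by_examples by blast
    with lang_\<tau> lang_p show ?thesis
      by simp
  qed
  ultimately show ?thesis
    by (simp add: teaching_set_def)
qed

theorem mainTheorem13:
  fixes zero one :: "'a"
  assumes "finite (UNIV :: 'a set)"
    and "zero \<noteq> one"
  defines "\<pi> \<equiv> replicate 4 (Var 1) @ replicate 8 (Var 2) @ replicate 9 (Var 3) :: 'a pattern"
    and "v1 \<equiv> wpow [zero, one] 4 @ wpow [zero, zero, one] 8 @ wpow [zero, zero, zero, one] 9"
    and "v2 \<equiv> wpow [zero, one] (fact 9) @ wpow [zero, zero, one] (fact 9)
              @ wpow [zero, zero, zero, one] (fact 9) @ wpow [zero, zero, zero, zero, one] (fact 9)"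
    and "v3 \<equiv> wpow [zero] 8 @ wpow (one # wpow [zero] 6) 8 @ wpow [zero] 3"
    and "v4 \<equiv> wpow [zero, one] 4 @ wpow [zero, zero, one] 4 @ wpow [zero, zero, zero, one] 9"
  shows "TD \<pi> (NC_class 9) \<le> 4
         \<and> teaching_set \<pi> (NC_class 9) {(v1, True), (v2, False), (v3, False), (v4, False)}"
proof -
  define \<phi> :: "bool \<Rightarrow> 'a" where "\<phi> b = (if b then one else zero)" for b
  have "inj \<phi>"
    using assms(2) by (auto simp: inj_def \<phi>_def)
  have "replicate 2 x = [x, x]" "replicate 3 x = [x, x, x]" "replicate 4 x = [x, x, x, x]"
    for x :: bool
    by (simp_all add: numeral_eq_Suc)
  then have "v1 = map \<phi> v1_bits" "v2 = map \<phi> (v2_bits (fact 9))" "v3 = map \<phi> v3_bits"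
      "v4 = map \<phi> v4_bits"
    by (simp_all add: v1_def v2_def v3_def v4_def v1_bits_def v2_bits_def v3_bits_def v4_bits_def
        gap_word_replicate map_wpow \<phi>_def)
  then have teaching:
      "teaching_set \<pi> (NC_class 9) {(v1, True), (v2, False), (v3, False), (v4, False)}"
    using teaching_set_power_lang_4_8_9[OF \<open>inj \<phi>\<close>] lang_pattern_4_8_9 by (simp add: \<pi>_def)
  have "card {(v1, True), (v2, False), (v3, False), (v4, False)} \<le> 4"
    by (auto simp: card_insert_if)
  with TD_le_card[OF teaching] have "TD \<pi> (NC_class 9) \<le> 4"
    by (simp add: numeral_eq_enat order_trans)
  with teaching show ?thesis
    by blast
qed

end
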